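(* Let $\Phi:\mathbb{R}\to\mathbb{R}$ be smooth and convex, and let $r_\pm,v_\pm,\sigma\in\mathbb{R}$ with $\sigma\neq0$, $r_-\neq r_+$, $\sigma[\![r]\!]+[\![v]\!]=0$ and $\sigma[\![v]\!]+[\![\Phi'(r)]\!]=0$. Then there is a one-to-one correspondence between fronts $(R,V)$ with speed $\sigma$ and asymptotic states $(r_\pm,v_\pm)$ and bounded measurable solutions $W$ of $$W=\mathcal{A}\widehat\Phi'(\mathcal{A}W)\quad\text{with}\quad W(\varphi)\to\pm1 \text{ as }\varphi\to\pm\infty,$$ given by $V=\langle v\rangle+\tfrac12[\![v]\!]W$ and $R(\varphi-\tfrac12)=\langle r\rangle+\tfrac12[\![r]\!](\mathcal{A}W)(\varphi)$.
   Context: A front with speed $\sigma$ and asymptotic states $(r_\pm,v_\pm)$ is a pair $R,V\in C^1(\mathbb{R})\cap L^\infty(\mathbb{R})$ with $R(\varphi)\to r_\pm$, $V(\varphi)\to v_\pm$ as $\varphi\to\pm\infty$, solving $\sigma R'(\varphi)+V(\varphi+1)-V(\varphi)=0$ and $\sigma V'(\varphi)+\Phi'(R(\varphi))-\Phi'(R(\varphi-1))=0$ for all $\varphi$. Notation: $[\![\psi]\!]=\psi(r_+,v_+)-\psi(r_-,v_-)$, $\langle\psi\rangle=\tfrac12(\psi(r_+,v_+)+\psi(r_-,v_-))$. The averaging operator is $(\mathcal{A}U)(\varphi)=\int_{\varphi-1/2}^{\varphi+1/2}U(s)\,ds$. The normalised potential is $\widehat\Phi(w)=\frac{4}{[\![\Phi'(r)]\!][\![r]\!]}\Phi(\langle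 r\rangle+\tfrac12[\![r]\!]w)-\frac{2\langle\Phi'(r)\rangle}{[\![\Phi'(r)]\!]}w$ (note $[\![\Phi'(r)]\!]=\sigma^2[\![r]\!]\neq0$). *)

theory Defs
  imports "HOL-Analysis.Analysis"
begin

definition smooth_real :: "(real \<Rightarrow> real) \<Rightarrow> bool" where
  "smooth_real f \<longleftrightarrow> (\<forall>n x. ((deriv ^^ n) f) differentiable (at x))"

definition avg :: "(real \<Rightarrow> real) \<Rightarrow> real \<Rightarrow> real" where
  "avg U \<phi> = integral {\<phi> - 1/2 .. \<phi> + 1/2} U"

definition jump :: "real \<Rightarrow> real \<Rightarrow> real" where
  "jump am ap = ap - am"
definition mean :: "real \<Rightarrow> real \<Rightarrow> real" where
  "mean am ap = (ap + am) / 2"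

definition Phi_hat :: "(real \<Rightarrow> real) \<Rightarrow> real \<Rightarrow> real \<Rightarrow> real \<Rightarrow> real" where
  "Phi_hat \<Phi> rm rp w =
     4 / (jump (deriv \<Phi> rm) (deriv \<Phi> rp) * jump rm rp)
       * \<Phi> (mean rm rp + jump rm rp / 2 * w)
     - 2 * mean (deriv \<Phi> rm) (deriv \<Phi> rp) / jump (deriv \<Phi> rm) (deriv \<Phi> rp) * w"

definition is_front ::
  "(real \<Rightarrow> real) \<Rightarrow> real \<Rightarrow> real \<Rightarrow> real \<Rightarrow> real \<Rightarrow> real
     \<Rightarrow> (real \<Rightarrow> real) \<Rightarrow> (real \<Rightarrow> real) \<Rightarrow> bool" where
  "is_front \<Phi> \<sigma> rm rp vm vp R V \<longleftrightarrow>
     R C1_differentiable_on UNIV \<and> V C1_differentiable_on UNIV \<and>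
     bounded (range R) \<and> bounded (range V) \<and>
     (R \<longlongrightarrow> rm) at_bot \<and> (R \<longlongrightarrow> rp) at_top \<and>
     (V \<longlongrightarrow> vm) at_bot \<and> (V \<longlongrightarrow> vp) at_top \<and>
     (\<forall>\<phi>. \<sigma> * deriv R \<phi> + V (\<phi> + 1) - V \<phi> = 0) \<and>
     (\<forall>\<phi>. \<sigma> * deriv V \<phi> + deriv \<Phi> (R \<phi>) - deriv \<Phi> (R (\<phi> - 1)) = 0)"

definition is_W_sol ::
  "(real \<Rightarrow> real) \<Rightarrow> real \<Rightarrow> real \<Rightarrow> (real \<Rightarrow> real) \<Rightarrow> bool" where
  "is_W_sol \<Phi> rm rp W \<longleftrightarrow>
     W \<in> borel_measurable lborel \<and> bounded (range W) \<and>
     (\<forall>\<phi>. W \<phi> = avg (\<lambda>s. deriv (Phi_hat \<Phi> rm rp) (avg W s)) \<phi>) \<and>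
     (W \<longlongrightarrow> -1) at_bot \<and> (W \<longlongrightarrow> 1) at_top"

definition front_corr ::
  "real \<Rightarrow> real \<Rightarrow> real \<Rightarrow> real \<Rightarrow> (real \<Rightarrow> real) \<Rightarrow> (real \<Rightarrow> real)
     \<Rightarrow> (real \<Rightarrow> real) \<Rightarrow> bool" where
  "front_corr rm rp vm vp R V W \<longleftrightarrow>
     (\<forall>\<phi>. V \<phi> = mean vm vp + jump vm vp / 2 * W \<phi>) \<and>
     (\<forall>\<phi>. R (\<phi> - 1/2) = mean rm rp + jump rm rp / 2 * avg W \<phi>)"

end

theory Submission
  imports Defs
begin

text \<open>Both front equations have the form \<open>\<sigma> g' + f(\<cdot> + 1/2) - f(\<cdot> - 1/2) = 0\<close>, whose
  left-hand side is the derivative of \<open>\<sigma> g + \<A>f\<close>. Integrated from \<open>-\<infinity>\<close> with the help of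
  the Rankine--Hugoniot conditions they become two conservation laws, which in the variables
  normalised to run from \<open>-1\<close> to \<open>1\<close> say precisely that \<open>R(\<cdot> - 1/2)\<close> corresponds to
  \<open>\<A>W\<close> and that \<open>W = \<A>(Phi_hat'(\<A>W))\<close>. Conversely, the fixed point equation makes \<open>W\<close>
  differentiable, so the conservation laws can be differentiated back into the front equations.\<close>

lemma integrable_on_interval_if_measurable_bounded:
  fixes f :: "real \<Rightarrow> real"
  assumes "f \<in> borel_measurable lborel" and "bounded (range f)"
  shows "f integrable_on {a..b}"
proof -
  obtain B where B: "\<And>x. \<bar>f x\<bar> \<le> B"
    using assms(2) unfolding bounded_iff by auto
  have "f \<in> borel_measurable lebesgue"
    using assms(1) by (metis measurable_completion measurable_lborel2 sets_lborel measurable_cong_sets)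
  then have "f \<in> borel_measurable (lebesgue_on {a..b})"
    by (simp add: measurable_restrict_space1)
  then show ?thesis
    by (rule measurable_bounded_by_integrable_imp_integrable[where g = "\<lambda>_. B"]) (use B in auto)
qed

lemma integrable_on_interval_if_continuous:
  fixes f :: "real \<Rightarrow> real"
  shows "continuous_on UNIV f \<Longrightarrow> f integrable_on {a..b}"
  by (intro integrable_continuous_real) (auto intro: continuous_on_subset)

lemma bounded_range_affine_comp:
  fixes f :: "'a \<Rightarrow> real"
  assumes "bounded (range f)"
  shows "bounded (range (\<lambda>x. c + d * f x))"
  using bounded_translation[OF bounded_scaleR_comp[OF assms], of c d]
  by (simp add: image_image)

lemma tendsto_shift_at_top:
  fixes f :: "real \<Rightarrow> real"
  assumes "(f \<longlongrightarrow> L) at_top"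
  shows "((\<lambda>x. f (x + c)) \<longlongrightarrow> L) at_top"
  using filterlim_compose[OF assms filterlim_tendsto_add_at_top[OF tendsto_const[of c] filterlim_ident]]
  by (simp add: o_def add.commute)

lemma tendsto_shift_at_bot:
  fixes f :: "real \<Rightarrow> real"
  assumes "(f \<longlongrightarrow> L) at_bot"
  shows "((\<lambda>x. f (x + c)) \<longlongrightarrow> L) at_bot"
  using filterlim_compose[OF assms
      filterlim_tendsto_add_at_bot_iff[OF tendsto_const[of c], THEN iffD2, OF filterlim_ident]]
  by (simp add: o_def add.commute)

lemma C1_differentiable_on_UNIV_iff_real:
  fixes f :: "real \<Rightarrow> real"
  shows "f C1_differentiable_on UNIV \<longleftrightarrow>
    (\<forall>x. (f has_real_derivative deriv f x) (at x)) \<and> continuous_on UNIV (deriv f)"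
proof
  assume "f C1_differentiable_on UNIV"
  then obtain D where D: "\<And>x. (f has_real_derivative D x) (at x)" "continuous_on UNIV D"
    unfolding C1_differentiable_on_def has_real_derivative_iff_has_vector_derivative by blast
  then have "deriv f = D"
    using DERIV_imp_deriv by blast
  with D show "(\<forall>x. (f has_real_derivative deriv f x) (at x)) \<and> continuous_on UNIV (deriv f)"
    by simp
qed (auto simp: C1_differentiable_on_def has_real_derivative_iff_has_vector_derivative)

lemma smooth_real_has_real_derivative:
  "smooth_real f \<Longrightarrow> (f has_real_derivative deriv f x) (at x)"
  unfolding smooth_real_def by (metis funpow_0 DERIV_deriv_iff_real_differentiable)

lemma smooth_real_continuous_on_deriv:
  assumes "smooth_real f"
  shows "continuous_on UNIV (deriv f)"
proof -
  have "deriv f differentiable (at x)" for x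
    using assms unfolding smooth_real_def by (metis funpow_0 funpow.simps(2) o_apply)
  then show ?thesis
    by (simp add: continuous_at_imp_continuous_on differentiable_imp_continuous_within)
qed

text \<open>One of the two integrals is over a degenerate interval, so this is the signed integral
  from \<open>0\<close> to \<open>x\<close>.\<close>
definition primitive :: "(real \<Rightarrow> real) \<Rightarrow> real \<Rightarrow> real" where
  "primitive f x = integral {0..x} f - integral {x..0} f"

lemma integral_eq_primitive_diff:
  assumes f: "\<And>a b. f integrable_on {a..b}" and "a \<le> b"
  shows "integral {a..b} f = primitive f b - primitive f a"
proof -
  have empty: "integral {c..d} f = 0" if "d \<le> c" for c d
    using that by (cases "c = d") auto
  consider "0 \<le> a" | "a \<le> 0" "0 \<le> b" | "b \<le> 0"
    by linarith
  then show ?thesis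
  proof cases
    case 1
    then show ?thesis
      using Henstock_Kurzweil_Integration.integral_combine[OF 1 \<open>a \<le> b\<close> f] \<open>a \<le> b\<close> by (simp add: primitive_def empty)
  next
    case 2
    then show ?thesis
      using Henstock_Kurzweil_Integration.integral_combine[OF 2 f] by (simp add: primitive_def empty)
  next
    case 3
    then show ?thesis
      using Henstock_Kurzweil_Integration.integral_combine[OF \<open>a \<le> b\<close> 3 f] \<open>a \<le> b\<close> by (simp add: primitive_def empty)
  qed
qed

lemma avg_eq_primitive_diff:
  assumes "\<And>a b. f integrable_on {a..b}"
  shows "avg f = (\<lambda>x. primitive f (x + 1/2) - primitive f (x - 1/2))"
  unfolding avg_def using integral_eq_primitive_diff[OF assms] by auto

lemma continuous_on_primitive:
  assumes f: "\<And>a b. f integrable_on {a..b}"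
  shows "continuous_on UNIV (primitive f)"
proof (rule continuous_at_imp_continuous_on, rule ballI)
  fix x :: real
  have "continuous_on {x-1..x+1} (\<lambda>u. integral {x-1..u} f + primitive f (x-1))"
    by (intro continuous_intros indefinite_integral_continuous_1 f)
  moreover have "integral {x-1..u} f + primitive f (x-1) = primitive f u" if "u \<in> {x-1..x+1}" for u
    using integral_eq_primitive_diff[OF f] that by force
  ultimately have "continuous_on {x-1..x+1} (primitive f)"
    using continuous_on_eq by blast
  then show "isCont (primitive f) x"
    by (rule continuous_on_interior) (simp add: interior_atLeastAtMost_real)
qed

lemma primitive_has_real_derivative:
  assumes f: "continuous_on UNIV f"
  shows "(primitive f has_real_derivative f x) (at x)"
proof -
  have "((\<lambda>u. integral {x-1..u} f) has_real_derivative f x) (at x within {x-1..x+1})"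
    by (rule integral_has_real_derivative) (auto intro: continuous_on_subset[OF f])
  then have "((\<lambda>u. integral {x-1..u} f + primitive f (x-1)) has_real_derivative f x) (at x)"
    by (subst (asm) at_within_interior)
      (auto simp: interior_atLeastAtMost_real intro: derivative_eq_intros)
  then show ?thesis
  proof (rule has_field_derivative_transform_within_open[where S = "{x-1<..<x+1}"])
    show "integral {x-1..u} f + primitive f (x-1) = primitive f u" if "u \<in> {x-1<..<x+1}" for u
      using integral_eq_primitive_diff[OF integrable_on_interval_if_continuous[OF f]] that by force
  qed auto
qed

lemma continuous_on_avg:
  assumes "\<And>a b. f integrable_on {a..b}"
  shows "continuous_on UNIV (avg f)"
  unfolding avg_eq_primitive_diff[OF assms]
  by (intro continuous_intros continuous_on_compose2[OF continuous_on_primitive[OF assms]]) auto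

lemma avg_has_real_derivative:
  assumes f: "continuous_on UNIV f"
  shows "(avg f has_real_derivative f (x + 1/2) - f (x - 1/2)) (at x)"
proof -
  show ?thesis
    by (subst avg_eq_primitive_diff[OF integrable_on_interval_if_continuous[OF f]])
      (auto intro!: derivative_eq_intros DERIV_chain2[OF primitive_has_real_derivative[OF f]])
qed

lemma avg_dist_le:
  assumes f: "\<And>a b. f integrable_on {a..b}"
    and le: "\<And>s. s \<in> {x-1/2..x+1/2} \<Longrightarrow> \<bar>f s - L\<bar> \<le> e"
  shows "\<bar>avg f x - L\<bar> \<le> e"
proof -
  have "avg f x - L = integral {x-1/2..x+1/2} (\<lambda>s. f s - L)"
    unfolding avg_def by (subst integral_diff) (auto intro: f)
  moreover have "((\<lambda>s. f s - L) has_integral integral {x-1/2..x+1/2} (\<lambda>s. f s - L)) {x-1/2..x+1/2}"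
    by (intro integrable_integral integrable_diff f) auto
  moreover have "0 \<le> e"
    using le[of x] by auto
  ultimately show ?thesis
    using has_integral_bound_real[OF \<open>0 \<le> e\<close> finite.emptyI, of "\<lambda>s. f s - L" _ "x-1/2" "x+1/2"] le
    by simp
qed

lemma tendsto_avg_at_top:
  assumes f: "\<And>a b. f integrable_on {a..b}" and lim: "(f \<longlongrightarrow> L) at_top"
  shows "(avg f \<longlongrightarrow> L) at_top"
proof (rule tendstoI)
  fix e :: real
  assume "e > 0"
  then obtain N where N: "\<And>s. s \<ge> N \<Longrightarrow> \<bar>f s - L\<bar> < e/2"
    using tendstoD[OF lim, of "e/2"] by (auto simp: eventually_at_top_linorder dist_real_def)
  have "\<bar>avg f x - L\<bar> \<le> e/2" if "x \<ge> N + 1/2" for x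
    using that N by (intro avg_dist_le[OF f]) (simp add: less_imp_le)
  then show "\<forall>\<^sub>F x in at_top. dist (avg f x) L < e"
    unfolding eventually_at_top_linorder dist_real_def using \<open>e > 0\<close> by force
qed

lemma tendsto_avg_at_bot:
  assumes f: "\<And>a b. f integrable_on {a..b}" and lim: "(f \<longlongrightarrow> L) at_bot"
  shows "(avg f \<longlongrightarrow> L) at_bot"
proof (rule tendstoI)
  fix e :: real
  assume "e > 0"
  then obtain N where N: "\<And>s. s \<le> N \<Longrightarrow> \<bar>f s - L\<bar> < e/2"
    using tendstoD[OF lim, of "e/2"] by (auto simp: eventually_at_bot_linorder dist_real_def)
  have "\<bar>avg f x - L\<bar> \<le> e/2" if "x \<le> N - 1/2" for x
    using that N by (intro avg_dist_le[OF f]) (simp add: less_imp_le)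
  then show "\<forall>\<^sub>F x in at_bot. dist (avg f x) L < e"
    unfolding eventually_at_bot_linorder dist_real_def using \<open>e > 0\<close> by force
qed

lemma avg_affine:
  assumes "\<And>a b. f integrable_on {a..b}"
  shows "avg (\<lambda>s. c + d * f s) x = c + d * avg f x"
  unfolding avg_def
  by (subst integral_add) (auto intro: assms integrable_on_mult_right simp: integral_mult_right)

lemma bounded_range_avg:
  assumes "\<And>a b. f integrable_on {a..b}" and "bounded (range f)"
  shows "bounded (range (avg f))"
proof -
  obtain B where "\<And>x. \<bar>f x\<bar> \<le> B"
    using assms(2) unfolding bounded_iff by auto
  then have "\<bar>avg f x\<bar> \<le> B" for x
    using avg_dist_le[OF assms(1), of x 0 B] by simp
  then show ?thesis
    unfolding bounded_iff by auto
qed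

text \<open>The left-hand side is the derivative of \<open>c g + \<A>f\<close>, whose limit at \<open>-\<infinity>\<close> fixes
  the constant.\<close>
lemma difference_equation_iff_integrated:
  fixes g f :: "real \<Rightarrow> real"
  assumes g: "\<And>x. (g has_real_derivative g' x) (at x)" and f: "continuous_on UNIV f"
    and lim: "((\<lambda>x. c * g x + avg f x) \<longlongrightarrow> L) at_bot"
  shows "(\<forall>x. c * g' x + f (x + 1/2) - f (x - 1/2) = 0) \<longleftrightarrow> (\<forall>x. c * g x + avg f x = L)"
proof -
  define H where "H x = c * g x + avg f x" for x
  have H: "(H has_real_derivative c * g' x + f (x + 1/2) - f (x - 1/2)) (at x)" for x
    unfolding H_def[abs_def]
    by (auto intro!: derivative_eq_intros g avg_has_real_derivative[OF f])
  show ?thesis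
  proof
    assume "\<forall>x. c * g' x + f (x + 1/2) - f (x - 1/2) = 0"
    then have "H x = H 0" for x
      using DERIV_isconst_all H by metis
    then have "(H \<longlongrightarrow> H 0) at_bot"
      by (simp add: tendsto_eventually)
    with lim have "H 0 = L"
      unfolding H_def[symmetric] using tendsto_unique[OF trivial_limit_at_bot_linorder] by blast
    then show "\<forall>x. c * g x + avg f x = L"
      using \<open>\<And>x. H x = H 0\<close> by (simp add: H_def)
  next
    assume "\<forall>x. c * g x + avg f x = L"
    then have "H = (\<lambda>_. L)"
      by (auto simp: H_def)
    then show "\<forall>x. c * g' x + f (x + 1/2) - f (x - 1/2) = 0"
      using H DERIV_const DERIV_unique by metis
  qed
qed

text \<open>The inverse of the affine map \<open>w \<mapsto> \<langle>a\<rangle> + \<lbrakk>a\<rbrakk> w / 2\<close> through which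
  \<open>front_corr\<close> and \<open>Phi_hat\<close> express states; it sends \<open>a\<close> to \<open>-1\<close> and \<open>b\<close> to \<open>1\<close>.\<close>
definition normalise :: "real \<Rightarrow> real \<Rightarrow> real \<Rightarrow> real" where
  "normalise a b y = (y - mean a b) / (jump a b / 2)"

lemma normalise_eq_affine: "normalise a b y = - (2 * mean a b / jump a b) + 2 / jump a b * y"
  by (simp add: normalise_def diff_divide_distrib ac_simps)

lemma mean_jump_normalise: "a \<noteq> b \<Longrightarrow> mean a b + jump a b / 2 * normalise a b y = y"
  by (simp add: normalise_def jump_def divide_simps) (simp add: algebra_simps)

lemma normalise_mean_jump: "a \<noteq> b \<Longrightarrow> normalise a b (mean a b + jump a b / 2 * w) = w"
  by (simp add: normalise_def jump_def)

lemma normalise_left: "a \<noteq> b \<Longrightarrow> normalise a b a = -1"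
  and normalise_right: "a \<noteq> b \<Longrightarrow> normalise a b b = 1"
  by (simp_all add: normalise_def mean_def jump_def field_simps)

lemma normalise_eq_iff_rankine_hugoniot:
  assumes "\<sigma> \<noteq> 0" "a \<noteq> b" "\<sigma> * jump a b + jump c d = 0"
  shows "normalise a b y = normalise c d z \<longleftrightarrow> \<sigma> * y + z = \<sigma> * a + c"
proof -
  have "jump c d = - \<sigma> * jump a b"
    using assms(3) by simp
  then have "normalise c d z = (- (z - mean c d) / \<sigma>) / (jump a b / 2)"
    using assms(1) by (simp add: normalise_def divide_simps)
  then have "normalise a b y = normalise c d z \<longleftrightarrow>
      (y - mean a b) / (jump a b / 2) = (- (z - mean c d) / \<sigma>) / (jump a b / 2)"
    by (simp only: normalise_def)
  also have "\<dots> \<longleftrightarrow> y - mean a b = - (z - mean c d) / \<sigma>"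
    using assms(2) by (simp only: divide_cancel_right) (simp add: jump_def)
  also have "\<dots> \<longleftrightarrow> \<sigma> * y + z = \<sigma> * mean a b + mean c d"
    using assms(1) by (auto simp: field_simps)
  also have "\<sigma> * mean a b + mean c d = \<sigma> * a + c"
    using assms(3) by (simp add: mean_def jump_def field_simps)
  finally show ?thesis .
qed

lemma avg_normalise:
  assumes "\<And>a b. f integrable_on {a..b}"
  shows "avg (\<lambda>s. normalise a b (f s)) x = normalise a b (avg f x)"
  unfolding normalise_eq_affine by (rule avg_affine[OF assms])

lemma deriv_Phi_hat:
  assumes "\<And>x. (\<Phi> has_real_derivative deriv \<Phi> x) (at x)"
    and "rm \<noteq> rp" and "deriv \<Phi> rm \<noteq> deriv \<Phi> rp"
  shows "deriv (Phi_hat \<Phi> rm rp) w =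
    normalise (deriv \<Phi> rm) (deriv \<Phi> rp) (deriv \<Phi> (mean rm rp + jump rm rp / 2 * w))"
proof -
  let ?jP = "jump (deriv \<Phi> rm) (deriv \<Phi> rp)" and ?jr = "jump rm rp"
  have jP: "?jP \<noteq> 0" and jr: "?jr \<noteq> 0"
    using assms(2,3) by (auto simp: jump_def)
  have "(Phi_hat \<Phi> rm rp has_real_derivative
      4 / (?jP * ?jr) * (deriv \<Phi> (mean rm rp + ?jr / 2 * w) * (?jr / 2))
        - 2 * mean (deriv \<Phi> rm) (deriv \<Phi> rp) / ?jP) (at w)"
    unfolding Phi_hat_def[abs_def] using jP jr
    by (auto intro!: derivative_eq_intros DERIV_chain2[OF assms(1)])
  from DERIV_imp_deriv[OF this] show ?thesis
    using jP jr by (simp add: normalise_def field_simps)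
qed

lemma front_corr_unique_W:
  assumes "vm \<noteq> vp" "front_corr rm rp vm vp R V W" "front_corr rm rp vm vp R V W'"
  shows "W = W'"
proof
  fix x
  have "mean vm vp + jump vm vp / 2 * W x = mean vm vp + jump vm vp / 2 * W' x"
    using assms(2,3) unfolding front_corr_def by metis
  then show "W x = W' x"
    using assms(1) by (simp add: jump_def)
qed

lemma front_corr_unique_front:
  assumes "front_corr rm rp vm vp R V W" "front_corr rm rp vm vp R' V' W"
  shows "R = R' \<and> V = V'"
proof
  show "R = R'"
  proof
    fix x
    show "R x = R' x"
      using assms unfolding front_corr_def by (metis add_diff_cancel_right')
  qed
  show "V = V'"
    using assms unfolding front_corr_def by auto
qed

locale rankine_hugoniot =
  fixes \<Phi> :: "real \<Rightarrow> real" and \<sigma> rm rp vm vp :: real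
  assumes smooth: "smooth_real \<Phi>"
    and speed_nonzero: "\<sigma> \<noteq> 0" and r_distinct: "rm \<noteq> rp"
    and rh_r: "\<sigma> * jump rm rp + jump vm vp = 0"
    and rh_v: "\<sigma> * jump vm vp + jump (deriv \<Phi> rm) (deriv \<Phi> rp) = 0"
begin

lemma v_distinct: "vm \<noteq> vp"
  using rh_r speed_nonzero r_distinct by (auto simp: jump_def)

lemma deriv_Phi_distinct: "deriv \<Phi> rm \<noteq> deriv \<Phi> rp"
  using rh_v speed_nonzero v_distinct by (auto simp: jump_def)

lemma continuous_on_deriv_Phi: "continuous_on UNIV (deriv \<Phi>)"
  by (rule smooth_real_continuous_on_deriv[OF smooth])

lemma deriv_Phi_hat_eq:
  "deriv (Phi_hat \<Phi> rm rp) w =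
    normalise (deriv \<Phi> rm) (deriv \<Phi> rp) (deriv \<Phi> (mean rm rp + jump rm rp / 2 * w))"
  by (rule deriv_Phi_hat[OF smooth_real_has_real_derivative[OF smooth] r_distinct deriv_Phi_distinct])

lemma continuous_on_deriv_Phi_comp:
  "continuous_on UNIV g \<Longrightarrow> continuous_on UNIV (\<lambda>s. deriv \<Phi> (g s))"
  by (rule continuous_on_compose2[OF continuous_on_deriv_Phi]) auto

lemma r_equation_iff_conservation:
  assumes R: "\<And>x. R differentiable (at x)" and V: "\<And>x. V differentiable (at x)"
    and "(R \<longlongrightarrow> rm) at_bot" and "(V \<longlongrightarrow> vm) at_bot"
  shows "(\<forall>x. \<sigma> * deriv R x + V (x + 1) - V x = 0) \<longleftrightarrow>
    (\<forall>x. normalise rm rp (R (x - 1/2)) = normalise vm vp (avg V x))"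
proof -
  have V_cont: "continuous_on UNIV V"
    using V by (simp add: continuous_at_imp_continuous_on differentiable_imp_continuous_within)
  have "((\<lambda>x. R (x - 1/2)) has_real_derivative deriv R (x - 1/2) * 1) (at x)" for x
    using R by (intro DERIV_chain2) (auto intro!: derivative_eq_intros
        simp: DERIV_deriv_iff_real_differentiable)
  moreover have "((\<lambda>x. \<sigma> * R (x - 1/2) + avg V x) \<longlongrightarrow> \<sigma> * rm + vm) at_bot"
    using assms(3,4) tendsto_shift_at_bot[of R rm "-1/2"]
    by (intro tendsto_intros tendsto_avg_at_bot integrable_on_interval_if_continuous[OF V_cont]) auto
  ultimately have "(\<forall>x. \<sigma> * deriv R (x - 1/2) + V (x + 1/2) - V (x - 1/2) = 0) \<longleftrightarrow>
      (\<forall>x. \<sigma> * R (x - 1/2) + avg V x = \<sigma> * rm + vm)"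
    by (intro difference_equation_iff_integrated[OF _ V_cont]) simp_all
  also have "(\<forall>x. \<sigma> * deriv R (x - 1/2) + V (x + 1/2) - V (x - 1/2) = 0) \<longleftrightarrow>
      (\<forall>x. \<sigma> * deriv R x + V (x + 1) - V x = 0)"
  proof (intro iffI allI)
    fix x
    assume "\<forall>x. \<sigma> * deriv R (x - 1/2) + V (x + 1/2) - V (x - 1/2) = 0"
    from this[rule_format, of "x + 1/2"] show "\<sigma> * deriv R x + V (x + 1) - V x = 0"
      by (simp add: add.assoc)
  next
    fix x
    assume "\<forall>x. \<sigma> * deriv R x + V (x + 1) - V x = 0"
    from this[rule_format, of "x - 1/2"]
    show "\<sigma> * deriv R (x - 1/2) + V (x + 1/2) - V (x - 1/2) = 0"
      by (simp add: algebra_simps)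
  qed
  finally show ?thesis
    using normalise_eq_iff_rankine_hugoniot[OF speed_nonzero r_distinct rh_r] by simp
qed

lemma v_equation_iff_conservation:
  assumes R: "\<And>x. R differentiable (at x)" and V: "\<And>x. V differentiable (at x)"
    and "(R \<longlongrightarrow> rm) at_bot" and "(V \<longlongrightarrow> vm) at_bot"
  shows "(\<forall>x. \<sigma> * deriv V x + deriv \<Phi> (R x) - deriv \<Phi> (R (x - 1)) = 0) \<longleftrightarrow>
    (\<forall>x. normalise vm vp (V x) =
      normalise (deriv \<Phi> rm) (deriv \<Phi> rp) (avg (\<lambda>s. deriv \<Phi> (R (s - 1/2))) x))"
proof -
  define F where "F s = deriv \<Phi> (R (s - 1/2))" for s
  have R_cont: "continuous_on UNIV R"
    using R by (simp add: continuous_at_imp_continuous_on differentiable_imp_continuous_within)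
  have F_cont: "continuous_on UNIV F"
    unfolding F_def
    by (intro continuous_on_deriv_Phi_comp continuous_on_compose2[OF R_cont] continuous_intros) auto
  have "isCont (deriv \<Phi>) rm"
    using continuous_on_deriv_Phi by (simp add: continuous_on_eq_continuous_at)
  from isCont_tendsto_compose[OF this tendsto_shift_at_bot[OF assms(3), of "-1/2"]]
  have "(F \<longlongrightarrow> deriv \<Phi> rm) at_bot"
    by (simp add: F_def[abs_def])
  then have "((\<lambda>x. \<sigma> * V x + avg F x) \<longlongrightarrow> \<sigma> * vm + deriv \<Phi> rm) at_bot"
    by (intro tendsto_intros tendsto_avg_at_bot integrable_on_interval_if_continuous[OF F_cont] assms(4))
  then have "(\<forall>x. \<sigma> * deriv V x + F (x + 1/2) - F (x - 1/2) = 0) \<longleftrightarrow>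
      (\<forall>x. \<sigma> * V x + avg F x = \<sigma> * vm + deriv \<Phi> rm)"
    using V by (intro difference_equation_iff_integrated[OF _ F_cont])
      (simp_all add: DERIV_deriv_iff_real_differentiable)
  then show ?thesis
    using normalise_eq_iff_rankine_hugoniot[OF speed_nonzero v_distinct rh_v]
    by (simp add: F_def[abs_def])
qed

lemma C1_if_front_equations:
  assumes R: "\<And>x. R differentiable (at x)" and V: "\<And>x. V differentiable (at x)"
    and eq_r: "\<And>x. \<sigma> * deriv R x + V (x + 1) - V x = 0"
    and eq_v: "\<And>x. \<sigma> * deriv V x + deriv \<Phi> (R x) - deriv \<Phi> (R (x - 1)) = 0"
  shows "R C1_differentiable_on UNIV \<and> V C1_differentiable_on UNIV"
proof -
  have R_cont: "continuous_on UNIV R" and V_cont: "continuous_on UNIV V"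
    using R V by (simp_all add: continuous_at_imp_continuous_on differentiable_imp_continuous_within)
  have "deriv R = (\<lambda>x. (V x - V (x + 1)) / \<sigma>)"
    using eq_r speed_nonzero by (intro ext) (simp add: eq_divide_eq algebra_simps)
  then have "continuous_on UNIV (deriv R)"
    using speed_nonzero by (auto intro!: continuous_intros continuous_on_compose2[OF V_cont])
  have "deriv V = (\<lambda>x. (deriv \<Phi> (R (x - 1)) - deriv \<Phi> (R x)) / \<sigma>)"
    using eq_v speed_nonzero by (intro ext) (simp add: eq_divide_eq algebra_simps)
  then have "continuous_on UNIV (deriv V)"
    using speed_nonzero by (auto intro!: continuous_intros continuous_on_compose2[OF continuous_on_deriv_Phi]
        continuous_on_compose2[OF R_cont])
  with \<open>continuous_on UNIV (deriv R)\<close> R V show ?thesis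
    by (simp add: C1_differentiable_on_UNIV_iff_real DERIV_deriv_iff_real_differentiable)
qed

lemma W_sol_of_front:
  assumes "is_front \<Phi> \<sigma> rm rp vm vp R V"
  defines "W \<equiv> \<lambda>x. normalise vm vp (V x)"
  shows "is_W_sol \<Phi> rm rp W \<and> front_corr rm rp vm vp R V W"
proof -
  from assms have R1: "R C1_differentiable_on UNIV" and V1: "V C1_differentiable_on UNIV"
    and V_bounded: "bounded (range V)"
    and R_bot: "(R \<longlongrightarrow> rm) at_bot"
    and V_bot: "(V \<longlongrightarrow> vm) at_bot" and V_top: "(V \<longlongrightarrow> vp) at_top"
    and eq_r: "\<forall>x. \<sigma> * deriv R x + V (x + 1) - V x = 0"
    and eq_v: "\<forall>x. \<sigma> * deriv V x + deriv \<Phi> (R x) - deriv \<Phi> (R (x - 1)) = 0"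
    unfolding is_front_def by auto
  have R_diff: "R differentiable (at x)" and V_diff: "V differentiable (at x)" for x
    using R1 V1 by (simp_all add: C1_differentiable_on_UNIV_iff_real DERIV_deriv_iff_real_differentiable)
  then have R_cont: "continuous_on UNIV R" and V_cont: "continuous_on UNIV V"
    by (simp_all add: continuous_at_imp_continuous_on differentiable_imp_continuous_within)
  have W_cont: "continuous_on UNIV W"
    unfolding W_def normalise_eq_affine by (intro continuous_intros V_cont)
  have avg_W: "avg W x = normalise vm vp (avg V x)" for x
    unfolding W_def by (rule avg_normalise[OF integrable_on_interval_if_continuous[OF V_cont]])
  have R_corr: "R (x - 1/2) = mean rm rp + jump rm rp / 2 * avg W x" for x
  proof -
    have "normalise rm rp (R (x - 1/2)) = avg W x"
      using r_equation_iff_conservation[OF R_diff V_diff R_bot V_bot] eq_r avg_W by simp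
    then show ?thesis
      using mean_jump_normalise[OF r_distinct] by metis
  qed
  have W_fix: "W x = avg (\<lambda>s. deriv (Phi_hat \<Phi> rm rp) (avg W s)) x" for x
  proof -
    have "W x = normalise (deriv \<Phi> rm) (deriv \<Phi> rp) (avg (\<lambda>s. deriv \<Phi> (R (s - 1/2))) x)"
      using v_equation_iff_conservation[OF R_diff V_diff R_bot V_bot] eq_v by (simp add: W_def)
    also have "\<dots> = avg (\<lambda>s. normalise (deriv \<Phi> rm) (deriv \<Phi> rp) (deriv \<Phi> (R (s - 1/2)))) x"
      by (intro avg_normalise[symmetric] integrable_on_interval_if_continuous
          continuous_on_deriv_Phi_comp continuous_on_compose2[OF R_cont] continuous_intros) auto
    also have "\<dots> = avg (\<lambda>s. deriv (Phi_hat \<Phi> rm rp) (avg W s)) x"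
      by (simp add: deriv_Phi_hat_eq R_corr)
    finally show ?thesis .
  qed
  have "(W \<longlongrightarrow> normalise vm vp vm) at_bot" and "(W \<longlongrightarrow> normalise vm vp vp) at_top"
    unfolding W_def normalise_eq_affine by (intro tendsto_intros V_bot V_top)+
  moreover have "bounded (range W)"
    unfolding W_def normalise_eq_affine by (rule bounded_range_affine_comp[OF V_bounded])
  moreover have "W \<in> borel_measurable lborel"
    using borel_measurable_continuous_onI[OF W_cont] by simp
  moreover have "V x = mean vm vp + jump vm vp / 2 * W x" for x
    unfolding W_def using mean_jump_normalise[OF v_distinct] by simp
  ultimately show ?thesis
    unfolding is_W_sol_def front_corr_def
    using W_fix R_corr normalise_left[OF v_distinct] normalise_right[OF v_distinct] by auto
qed

lemma front_of_W_sol: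
  assumes "is_W_sol \<Phi> rm rp W"
  defines "R \<equiv> \<lambda>x. mean rm rp + jump rm rp / 2 * avg W (x + 1/2)"
    and "V \<equiv> \<lambda>x. mean vm vp + jump vm vp / 2 * W x"
  shows "is_front \<Phi> \<sigma> rm rp vm vp R V \<and> front_corr rm rp vm vp R V W"
proof -
  from assms have W_meas: "W \<in> borel_measurable lborel" and W_bounded: "bounded (range W)"
    and W_fix: "\<And>x. W x = avg (\<lambda>s. deriv (Phi_hat \<Phi> rm rp) (avg W s)) x"
    and W_bot: "(W \<longlongrightarrow> -1) at_bot" and W_top: "(W \<longlongrightarrow> 1) at_top"
    unfolding is_W_sol_def by auto
  have W_int: "\<And>a b. W integrable_on {a..b}"
    by (rule integrable_on_interval_if_measurable_bounded[OF W_meas W_bounded])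
  define h where "h s = deriv \<Phi> (mean rm rp + jump rm rp / 2 * avg W s)" for s
  have h_cont: "continuous_on UNIV h"
    unfolding h_def
    by (intro continuous_on_deriv_Phi_comp continuous_intros continuous_on_avg[OF W_int])
  have W_eq: "W x = normalise (deriv \<Phi> rm) (deriv \<Phi> rp) (avg h x)" for x
    using W_fix[of x] avg_normalise[OF integrable_on_interval_if_continuous[OF h_cont]]
    by (simp add: deriv_Phi_hat_eq h_def)
  have "(W has_real_derivative
      2 / jump (deriv \<Phi> rm) (deriv \<Phi> rp) * (h (x + 1/2) - h (x - 1/2))) (at x)" for x
    unfolding W_eq[abs_def] normalise_eq_affine using deriv_Phi_distinct
    by (auto simp: jump_def intro!: derivative_eq_intros avg_has_real_derivative[OF h_cont])
  then have W_diff: "W differentiable (at x)" for x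
    using real_differentiable_def by blast
  then have W_cont: "continuous_on UNIV W"
    by (simp add: continuous_at_imp_continuous_on differentiable_imp_continuous_within)
  have "((\<lambda>x. avg W (x + 1/2)) has_real_derivative (W (x + 1/2 + 1/2) - W (x + 1/2 - 1/2)) * 1) (at x)" for x
    by (intro DERIV_chain2[OF avg_has_real_derivative[OF W_cont]]) (auto intro!: derivative_eq_intros)
  then have "(\<lambda>x. avg W (x + 1/2)) differentiable (at x)" for x
    using real_differentiable_def by blast
  then have R_diff: "R differentiable (at x)" for x
    unfolding R_def by (intro derivative_intros)
  have V_diff: "V differentiable (at x)" for x
    unfolding V_def by (intro derivative_intros W_diff)
  have R_bot: "(R \<longlongrightarrow> rm) at_bot" and R_top: "(R \<longlongrightarrow> rp) at_top"
  proof -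
    have "(R \<longlongrightarrow> mean rm rp + jump rm rp / 2 * -1) at_bot"
      and "(R \<longlongrightarrow> mean rm rp + jump rm rp / 2 * 1) at_top"
      unfolding R_def
      by (intro tendsto_intros tendsto_shift_at_bot tendsto_shift_at_top
          tendsto_avg_at_bot[OF W_int W_bot] tendsto_avg_at_top[OF W_int W_top])+
    then show "(R \<longlongrightarrow> rm) at_bot" "(R \<longlongrightarrow> rp) at_top"
      by (simp_all add: mean_def jump_def field_simps)
  qed
  have V_bot: "(V \<longlongrightarrow> vm) at_bot" and V_top: "(V \<longlongrightarrow> vp) at_top"
  proof -
    have "(V \<longlongrightarrow> mean vm vp + jump vm vp / 2 * -1) at_bot"
      and "(V \<longlongrightarrow> mean vm vp + jump vm vp / 2 * 1) at_top"
      unfolding V_def by (intro tendsto_intros W_bot W_top)+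
    then show "(V \<longlongrightarrow> vm) at_bot" "(V \<longlongrightarrow> vp) at_top"
      by (simp_all add: mean_def jump_def field_simps)
  qed
  have W_V: "W = (\<lambda>x. normalise vm vp (V x))"
    unfolding V_def using normalise_mean_jump[OF v_distinct] by simp
  have R_shift: "R (x - 1/2) = mean rm rp + jump rm rp / 2 * avg W x" for x
    by (simp add: R_def)
  have V_int: "\<And>a b. V integrable_on {a..b}"
    using V_diff by (intro integrable_on_interval_if_continuous)
      (simp add: continuous_at_imp_continuous_on differentiable_imp_continuous_within)
  have "normalise rm rp (R (x - 1/2)) = normalise vm vp (avg V x)" for x
    unfolding R_shift normalise_mean_jump[OF r_distinct] W_V by (rule avg_normalise[OF V_int])
  then have eq_r: "\<forall>x. \<sigma> * deriv R x + V (x + 1) - V x = 0"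
    using r_equation_iff_conservation[OF R_diff V_diff R_bot V_bot] by blast
  have "(\<lambda>s. deriv \<Phi> (R (s - 1/2))) = h"
    unfolding R_shift h_def ..
  then have "normalise vm vp (V x) =
      normalise (deriv \<Phi> rm) (deriv \<Phi> rp) (avg (\<lambda>s. deriv \<Phi> (R (s - 1/2))) x)" for x
    using fun_cong[OF W_V, of x] W_eq[of x] by simp
  then have eq_v: "\<forall>x. \<sigma> * deriv V x + deriv \<Phi> (R x) - deriv \<Phi> (R (x - 1)) = 0"
    using v_equation_iff_conservation[OF R_diff V_diff R_bot V_bot] by blast
  have "bounded (range V)"
    unfolding V_def by (rule bounded_range_affine_comp[OF W_bounded])
  moreover have "bounded (range R)"
    unfolding R_def
    by (intro bounded_range_affine_comp bounded_subset[OF bounded_range_avg[OF W_int W_bounded]]) auto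
  moreover have "front_corr rm rp vm vp R V W"
    unfolding front_corr_def R_def V_def by simp
  moreover have "R C1_differentiable_on UNIV \<and> V C1_differentiable_on UNIV"
    by (rule C1_if_front_equations[OF R_diff V_diff eq_r[rule_format] eq_v[rule_format]])
  ultimately show ?thesis
    unfolding is_front_def using eq_r eq_v R_bot R_top V_bot V_top by simp
qed

end

theorem lemma2p2:
  fixes \<Phi> :: "real \<Rightarrow> real" and rm rp vm vp \<sigma> :: real
  assumes "smooth_real \<Phi>" and "convex_on UNIV \<Phi>"
    and "\<sigma> \<noteq> 0" and "rm \<noteq> rp"
    and "\<sigma> * jump rm rp + jump vm vp = 0"
    and "\<sigma> * jump vm vp + jump (deriv \<Phi> rm) (deriv \<Phi> rp) = 0"
  shows "(\<forall>R V. is_front \<Phi> \<sigma> rm rp vm vp R V \<longrightarrow>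
            (\<exists>!W. is_W_sol \<Phi> rm rp W \<and> front_corr rm rp vm vp R V W)) \<and>
         (\<forall>W. is_W_sol \<Phi> rm rp W \<longrightarrow>
            (\<exists>!RV. is_front \<Phi> \<sigma> rm rp vm vp (fst RV) (snd RV) \<and>
                   front_corr rm rp vm vp (fst RV) (snd RV) W))"
  \<comment> \<open>Convexity of \<open>\<Phi>\<close> matters for the existence of fronts, not for this correspondence.\<close>
proof -
  interpret rankine_hugoniot \<Phi> \<sigma> rm rp vm vp
    using assms(1,3-6) by unfold_locales
  show ?thesis
  proof (intro conjI allI impI)
    fix R V
    assume front: "is_front \<Phi> \<sigma> rm rp vm vp R V"
    show "\<exists>!W. is_W_sol \<Phi> rm rp W \<and> front_corr rm rp vm vp R V W"
    proof (rule ex1I)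
      show "is_W_sol \<Phi> rm rp (\<lambda>x. normalise vm vp (V x)) \<and>
          front_corr rm rp vm vp R V (\<lambda>x. normalise vm vp (V x))"
        by (rule W_sol_of_front[OF front])
      show "W = (\<lambda>x. normalise vm vp (V x))"
        if "is_W_sol \<Phi> rm rp W \<and> front_corr rm rp vm vp R V W" for W
        using front_corr_unique_W[OF v_distinct] W_sol_of_front[OF front] that by blast
    qed
  next
    fix W
    assume sol: "is_W_sol \<Phi> rm rp W"
    let ?RV = "(\<lambda>x. mean rm rp + jump rm rp / 2 * avg W (x + 1/2),
                \<lambda>x. mean vm vp + jump vm vp / 2 * W x)"
    show "\<exists>!RV. is_front \<Phi> \<sigma> rm rp vm vp (fst RV) (snd RV) \<and>
        front_corr rm rp vm vp (fst RV) (snd RV) W"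
    proof (rule ex1I)
      show "is_front \<Phi> \<sigma> rm rp vm vp (fst ?RV) (snd ?RV) \<and>
          front_corr rm rp vm vp (fst ?RV) (snd ?RV) W"
        using front_of_W_sol[OF sol] by simp
      show "RV = ?RV"
        if "is_front \<Phi> \<sigma> rm rp vm vp (fst RV) (snd RV) \<and>
          front_corr rm rp vm vp (fst RV) (snd RV) W" for RV
        using front_corr_unique_front[OF conjunct2[OF that] conjunct2[OF front_of_W_sol[OF sol]]]
        by (simp add: prod_eq_iff)
    qed
  qed
qed

end
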